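(* Let $n\ge 2$ be an integer and $t>1$ a real number, and let $O^t_n$ be the set of $n$ line segments in the plane defined below. Then every imprecise $t$-spanner for $O^t_n$ is the complete graph: for any two distinct segments of $O^t_n$ there is an edge between them. In particular, every imprecise $t$-spanner for $O^t_n$ has $\binom{n}{2}=\Omega(n^2)$ edges.
   Context: Construction of $O^t_n$: let $\theta=2\pi/n$ and for $0\le i<n$ let $\ell_i$ be the ray from the origin obtained by rotating the positive $x$-axis by angle $i\theta$. Let $D_1,D_2$ be the disks centered at the origin with radii $0.4$ and $(t+1)/2$. Let $p_i$ and $q_i$ be the intersection points of $\ell_i$ with the boundaries of $D_1$ and $D_2$ respectively. Then $O^t_n=\{\overline{p_iq_i} : 0\le i<n\}$, a set of pairwise disjoint segments. An imprecise point set is a set $R=\{R_1,\dots,R_n\}$ of regions in $\mathbb{R}^d$; a precise instance of $R$ is a set $S=\{x_1,\dots,x_n\}$ with $x_i\in R_i$ for all $i$. An imprecise graph $G=(R,E)$ has as edges unordered pairs of regions; for a precise instance $S$, $G_S=(S,E_S)$ with $E_S=\{\{x_i,x_j\}:\{R_i,R_j\}\in E\}$, edges weighted by Euclidean length. A geometric graph $H$ on a point set is a $t$-spanner if for all distinct vertices $u,v$ the shortest-path distance $d_H(u,v)$ satisfies $d_H(u,v)\le t\,|uv|$. $G$ is an imprecise $t$-spanner for $R$ if $G_S$ is a $t$-spanner for every precise instance $S$ of $R$. *)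

theory Defs
  imports "HOL-Analysis.Analysis" "HOL-Library.Extended_Real"
begin

text \<open>The plane R^2 is modelled by the complex numbers (Euclidean distance = dist).\<close>

definition O_seg :: "real \<Rightarrow> nat \<Rightarrow> nat \<Rightarrow> complex set" where
  "O_seg t n i = closed_segment (complex_of_real 0.4 * cis (real i * (2 * pi / real n)))
                                (complex_of_real ((t + 1) / 2) * cis (real i * (2 * pi / real n)))"

definition precise_instance :: "nat \<Rightarrow> (nat \<Rightarrow> complex set) \<Rightarrow> (nat \<Rightarrow> complex) \<Rightarrow> bool" where
  "precise_instance n R x \<longleftrightarrow> (\<forall>i<n. x i \<in> R i)"

definition imprecise_graph :: "nat \<Rightarrow> nat set set \<Rightarrow> bool" where
  "imprecise_graph n E \<longleftrightarrow> E \<subseteq> {{i, j} | i j. i < n \<and> j < n \<and> i \<noteq> j}"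

definition walk :: "nat \<Rightarrow> nat set set \<Rightarrow> nat list \<Rightarrow> nat \<Rightarrow> nat \<Rightarrow> bool" where
  "walk n E ws i j \<longleftrightarrow> ws \<noteq> [] \<and> hd ws = i \<and> last ws = j \<and> (\<forall>k\<in>set ws. k < n) \<and>
     (\<forall>(a, b) \<in> set (zip ws (tl ws)). {a, b} \<in> E)"

definition walk_length :: "(nat \<Rightarrow> complex) \<Rightarrow> nat list \<Rightarrow> real" where
  "walk_length x ws = (\<Sum>(a, b) \<leftarrow> zip ws (tl ws). dist (x a) (x b))"

text \<open>Shortest-path distance in G_S (infinite if no path exists).\<close>
definition graph_dist :: "nat \<Rightarrow> nat set set \<Rightarrow> (nat \<Rightarrow> complex) \<Rightarrow> nat \<Rightarrow> nat \<Rightarrow> ereal" where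
  "graph_dist n E x i j = (INF ws \<in> {ws. walk n E ws i j}. ereal (walk_length x ws))"

definition is_t_spanner :: "nat \<Rightarrow> nat set set \<Rightarrow> (nat \<Rightarrow> complex) \<Rightarrow> real \<Rightarrow> bool" where
  "is_t_spanner n E x t \<longleftrightarrow>
     (\<forall>i<n. \<forall>j<n. x i \<noteq> x j \<longrightarrow> graph_dist n E x i j \<le> ereal (t * dist (x i) (x j)))"

definition imprecise_t_spanner :: "nat \<Rightarrow> (nat \<Rightarrow> complex set) \<Rightarrow> nat set set \<Rightarrow> real \<Rightarrow> bool" where
  "imprecise_t_spanner n R E t \<longleftrightarrow> imprecise_graph n E \<and>
     (\<forall>x. precise_instance n R x \<longrightarrow> is_t_spanner n E x t)"

end

theory Submission
  imports Defs
begin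

text \<open>Put the two chosen segments' inner endpoints \<open>p\<^sub>i, p\<^sub>j\<close> (at distance at most \<open>0.8\<close>)
  into the instance and every other segment's outer endpoint (at radius \<open>(t+1)/2\<close>).
  Without the edge \<open>{i, j}\<close>, a path from \<open>p\<^sub>i\<close> to \<open>p\<^sub>j\<close> must detour through an outer point,
  so it has length at least \<open>2((t+1)/2 - 0.4) = t + 0.2 > 0.8 t\<close>, which violates the
  spanner condition.\<close>

lemma walk_length_Cons_Cons [simp]:
  "walk_length x (a # b # rest) = dist (x a) (x b) + walk_length x (b # rest)"
  by (simp add: walk_length_def)

lemma dist_hd_last_le_walk_length:
  "ws \<noteq> [] \<Longrightarrow> dist (x (hd ws)) (x (last ws)) \<le> walk_length x ws"
proof (induction ws rule: induct_list012)
  case (3 a b rest)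
  then show ?case
    using dist_triangle[of "x a" "x (last (b # rest))" "x b"] by simp
qed (simp_all add: walk_length_def)

lemma walk_length_ge_via_second:
  "dist (x a) (x b) + dist (x b) (x (last (b # rest))) \<le> walk_length x (a # b # rest)"
  using dist_hd_last_le_walk_length[of "b # rest" x] by simp

lemma graph_dist_ge_detour:
  assumes "imprecise_graph n E" and "i \<noteq> j" and "{i, j} \<notin> E"
    and detour: "\<And>k. k < n \<Longrightarrow> k \<noteq> i \<Longrightarrow> k \<noteq> j \<Longrightarrow> L \<le> dist (x i) (x k) + dist (x k) (x j)"
  shows "ereal L \<le> graph_dist n E x i j"
  unfolding graph_dist_def
proof (rule INF_greatest, clarify)
  fix ws assume "walk n E ws i j"
  then have ws: "ws \<noteq> []" "hd ws = i" "last ws = j" "\<forall>k\<in>set ws. k < n"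
    and edges: "\<forall>(a, b)\<in>set (zip ws (tl ws)). {a, b} \<in> E"
    unfolding walk_def by auto
  then obtain b rest where ws_eq: "ws = i # b # rest"
    using \<open>i \<noteq> j\<close> by (cases ws rule: remdups_adj.cases) auto
  have "{i, b} \<in> E"
    using edges ws_eq by simp
  then have "b \<noteq> i" and "b \<noteq> j"
    using assms(1,3) unfolding imprecise_graph_def by (auto simp: doubleton_eq_iff)
  moreover have "b < n"
    using ws(4) ws_eq by simp
  ultimately have "L \<le> dist (x i) (x b) + dist (x b) (x j)"
    by (simp add: detour)
  also have "\<dots> \<le> walk_length x ws"
    using walk_length_ge_via_second[of x i b rest] ws(3) ws_eq by simp
  finally show "ereal L \<le> ereal (walk_length x ws)"
    by simp
qed

lemma card_complete_imprecise_graph: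
  assumes "imprecise_graph n E" and complete: "\<forall>i<n. \<forall>j<n. i \<noteq> j \<longrightarrow> {i, j} \<in> E"
  shows "card E = n choose 2"
proof -
  have "E = {B. B \<subseteq> {0..<n} \<and> card B = 2}"
  proof
    show "E \<subseteq> {B. B \<subseteq> {0..<n} \<and> card B = 2}"
      using assms(1) unfolding imprecise_graph_def by auto
    show "{B. B \<subseteq> {0..<n} \<and> card B = 2} \<subseteq> E"
      using complete by (auto simp: card_2_iff)
  qed
  then show ?thesis
    using n_subsets[of "{0..<n}" 2] by simp
qed

lemma inj_on_cis_multiples:
  assumes "n > 0"
  shows "inj_on (\<lambda>k. cis (real k * (2 * pi / real n))) {..<n}"
  using bij_betw_imp_inj_on[OF Complex.bij_betw_roots_unity[OF assms]] by (simp add: mult_ac)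

lemma imprecise_t_spanner_O_seg_edge:
  assumes "t \<ge> 0" and spanner: "imprecise_t_spanner n (O_seg t n) E t"
    and "i < n" and "j < n" and "i \<noteq> j"
  shows "{i, j} \<in> E"
proof (rule ccontr)
  assume non_edge: "{i, j} \<notin> E"
  define c where "c k = cis (real k * (2 * pi / real n))" for k
  define x where "x k = (if k = i \<or> k = j then complex_of_real 0.4 * c k
                          else complex_of_real ((t + 1) / 2) * c k)" for k
  have norm_inner: "norm (x i) = 0.4" "norm (x j) = 0.4"
    by (simp_all add: x_def c_def norm_mult)
  have norm_outer: "norm (x k) = (t + 1) / 2" if "k \<noteq> i" and "k \<noteq> j" for k
    using that \<open>t \<ge> 0\<close> by (simp add: x_def c_def norm_mult)
  have graph: "imprecise_graph n E"
    using spanner unfolding imprecise_t_spanner_def by blast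
  have "precise_instance n (O_seg t n) x"
    unfolding precise_instance_def x_def O_seg_def c_def by auto
  then have "is_t_spanner n E x t"
    using spanner unfolding imprecise_t_spanner_def by blast
  moreover have "x i \<noteq> x j"
    using inj_on_cis_multiples[of n] assms(3-5) by (auto simp: x_def c_def inj_on_def)
  ultimately have upper: "graph_dist n E x i j \<le> ereal (t * dist (x i) (x j))"
    using assms(3,4) unfolding is_t_spanner_def by blast
  have detour: "t + 0.2 \<le> dist (x i) (x k) + dist (x k) (x j)"
    if "k \<noteq> i" and "k \<noteq> j" for k
  proof -
    have "norm (x k) - norm (x i) \<le> dist (x i) (x k)"
      using norm_triangle_ineq2[of "x k" "x i"] by (simp add: dist_norm norm_minus_commute)
    moreover have "norm (x k) - norm (x j) \<le> dist (x k) (x j)"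
      using norm_triangle_ineq2[of "x k" "x j"] by (simp add: dist_norm)
    ultimately show ?thesis
      using norm_inner norm_outer[OF that] by argo
  qed
  have "ereal (t + 0.2) \<le> graph_dist n E x i j"
    by (rule graph_dist_ge_detour[OF graph \<open>i \<noteq> j\<close> non_edge]) (rule detour)
  then have "t + 0.2 \<le> t * dist (x i) (x j)"
    using upper by (metis ereal_less_eq(3) order_trans)
  moreover have "dist (x i) (x j) \<le> 0.8"
    using norm_triangle_ineq4[of "x i" "x j"] norm_inner unfolding dist_norm by argo
  then have "t * dist (x i) (x j) \<le> t * 0.8"
    using \<open>t \<ge> 0\<close> by (rule mult_left_mono)
  ultimately show False
    using \<open>t \<ge> 0\<close> by argo
qed

theorem lemma1:
  fixes n :: nat and t :: real and E :: "nat set set"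
  assumes "n \<ge> 2" and "t > 1"
    and "imprecise_t_spanner n (O_seg t n) E t"
  shows "(\<forall>i<n. \<forall>j<n. i \<noteq> j \<longrightarrow> {i, j} \<in> E) \<and> card E = n choose 2"
proof -
  have "\<forall>i<n. \<forall>j<n. i \<noteq> j \<longrightarrow> {i, j} \<in> E"
    using imprecise_t_spanner_O_seg_edge[OF _ assms(3)] assms(2) by auto
  moreover have "imprecise_graph n E"
    using assms(3) unfolding imprecise_t_spanner_def by blast
  ultimately show ?thesis
    using card_complete_imprecise_graph by blast
qed

end
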